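(* Let $m\ge n\ge1$ and let $G=(g_1,\dots,g_m):\mathbb{B}^n\to\mathbb{B}^m$ be a proper holomorphic map with $G(0)=0$. Define $H_G=\big(g_1,\dots,g_{m-1},\frac{P_m}{Q},\frac{P_{m+1}}{Q}\big)$ where $P_m=\frac12\sum_{i=1}^{m-1}g_i^2-g_m^2+g_m$, $P_{m+1}=\sqrt{-1}\big(\frac12\sum_{i=1}^{m-1}g_i^2+g_m^2-g_m\big)$, $Q=\sqrt2(1-g_m)$, and $W_G=\big(g_1,\dots,g_m,1-\sqrt{1-\sum_{j=1}^mg_j^2}\big)$ (branch with $\sqrt1=1$). Then for $\Phi\in\{H_G,W_G\}$ one has $1-\Phi\overline{\Phi}^t+\frac14|\Phi\Phi^t|^2=1-\sum_{i=1}^m|g_i|^2$ on $\mathbb{B}^n$, and both $H_G$ and $W_G$ are proper holomorphic maps from $\mathbb{B}^n$ to $D^{IV}_{m+1}$.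
   Context: $\mathbb{B}^n=\{z\in\mathbb{C}^n:|z|^2<1\}$; $D^{IV}_k=\{Z\in\mathbb{C}^k: Z\overline{Z}^t<2,\ 1-Z\overline{Z}^t+\tfrac14|ZZ^t|^2>0\}$ (row vectors). Proper means preimages of compact sets are compact. *)

theory Defs
  imports "HOL-Analysis.Analysis"
begin

text \<open>Points of C^k are vectors complex^'k (index type of cardinality k).
  The norm is the Euclidean (Hermitian) norm, so ball 0 1 is the unit ball.\<close>

definition unit_ball :: "(complex ^ 'k) set" where
  "unit_ball = {z. (\<Sum>i\<in>UNIV. (cmod (z $ i))\<^sup>2) < 1}"

text \<open>Z conj(Z)^t and Z Z^t for a row vector Z.\<close>
definition hnorm2 :: "complex ^ 'k \<Rightarrow> real" where
  "hnorm2 Z = (\<Sum>i\<in>UNIV. (cmod (Z $ i))\<^sup>2)"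

definition bilin :: "complex ^ 'k \<Rightarrow> complex" where
  "bilin Z = (\<Sum>i\<in>UNIV. (Z $ i)\<^sup>2)"

definition DIV :: "(complex ^ 'k) set" where
  "DIV = {Z. hnorm2 Z < 2 \<and> 1 - hnorm2 Z + (1/4) * (cmod (bilin Z))\<^sup>2 > 0}"

definition holo_on :: "(complex ^ 'n \<Rightarrow> complex ^ 'm) \<Rightarrow> (complex ^ 'n) set \<Rightarrow> bool" where
  "holo_on f S \<longleftrightarrow> (\<forall>z\<in>S. \<exists>L. (f has_derivative L) (at z) \<and>
                        (\<forall>(c::complex) w. L (c *s w) = c *s L w))"

definition proper_map :: "('a::topological_space \<Rightarrow> 'b::topological_space) \<Rightarrow> 'a set \<Rightarrow> 'b set \<Rightarrow> bool" where
  "proper_map f S T \<longleftrightarrow> f ` S \<subseteq> T \<and> (\<forall>K. K \<subseteq> T \<and> compact K \<longrightarrow> compact (S \<inter> f -` K))"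

definition holo_proper :: "(complex ^ 'n \<Rightarrow> complex ^ 'm) \<Rightarrow> (complex ^ 'n) set \<Rightarrow> (complex ^ 'm) set \<Rightarrow> bool" where
  "holo_proper f S T \<longleftrightarrow> holo_on f S \<and> proper_map f S T"

text \<open>The components of G are indexed by 'm; the distinguished
  index l plays the role of the last coordinate g_m. The target C^(m+1) is indexed by
  'm + unit, with the new coordinate at Inr ().\<close>
definition H_map :: "(complex ^ 'n \<Rightarrow> complex ^ 'm) \<Rightarrow> 'm \<Rightarrow> complex ^ 'n \<Rightarrow> complex ^ ('m + unit)" where
  "H_map G l z = (let g = G z;
                      s = (\<Sum>i\<in>UNIV - {l}. (g $ i)\<^sup>2);
                      Pm = s / 2 - (g $ l)\<^sup>2 + g $ l;
                      Pm1 = \<i> * (s / 2 + (g $ l)\<^sup>2 - g $ l);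
                      Q = complex_of_real (sqrt 2) * (1 - g $ l)
                  in (\<chi> j. case j of Inl i \<Rightarrow> (if i = l then Pm / Q else g $ i)
                                   | Inr _ \<Rightarrow> Pm1 / Q))"

definition W_map :: "(complex ^ 'n \<Rightarrow> complex ^ 'm) \<Rightarrow> complex ^ 'n \<Rightarrow> complex ^ ('m + unit)" where
  "W_map G z = (\<chi> j. case j of Inl i \<Rightarrow> G z $ i
                     | Inr _ \<Rightarrow> 1 - csqrt (1 - (\<Sum>i\<in>UNIV. (G z $ i)\<^sup>2)))"

end

theory Submission
  imports Defs
begin

text \<open>Write \<open>\<rho>(Z) = 1 - \<bar>Z\<bar>\<^sup>2 + \<bar>Z Z\<^sup>t\<bar>\<^sup>2/4\<close>, so that \<open>D\<^sup>I\<^sup>V\<close> contains every \<open>Z\<close> with \<open>\<rho>(Z) > 0\<close>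
  and \<open>\<bar>Z Z\<^sup>t\<bar> < 2\<close>. Both maps pull \<open>\<rho>\<close> back to \<open>1 - \<bar>G\<bar>\<^sup>2\<close>. For \<open>W\<^sub>G\<close> the new coordinate
  \<open>w = 1 - \<surd>(1 - G G\<^sup>t)\<close> solves \<open>w\<^sup>2 - 2w + G G\<^sup>t = 0\<close>, hence \<open>W W\<^sup>t = 2w\<close> and
  \<open>\<bar>W\<bar>\<^sup>2 = \<bar>G\<bar>\<^sup>2 + \<bar>w\<bar>\<^sup>2\<close>; for \<open>H\<^sub>G\<close> one computes \<open>H H\<^sup>t = s/(1 - g\<^sub>m)\<close> with
  \<open>s = \<Sum>\<^sub>i\<^sub><\<^sub>m g\<^sub>i\<^sup>2\<close>. In both cases \<open>\<bar>Z Z\<^sup>t\<bar> < 2\<close> on the ball, so the images lie in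
  \<open>D\<^sup>I\<^sup>V\<close>. Properness is inherited from \<open>G\<close>: on a compact subset of \<open>D\<^sup>I\<^sup>V\<close> the function
  \<open>\<rho>\<close> is bounded below by some \<open>e > 0\<close>, which confines its preimage to the preimage under
  \<open>G\<close> of the compact ball of radius \<open>\<surd>(1 - e)\<close>.\<close>

lemma has_derivative_vec_lambda:
  fixes f :: "'a::real_normed_vector \<Rightarrow> 'b::real_normed_vector ^ 'n"
  assumes "\<And>i. ((\<lambda>x. f x $ i) has_derivative f' i) (at z)"
  shows "(f has_derivative (\<lambda>h. \<chi> i. f' i h)) (at z)"
  unfolding has_derivative_at_within
proof
  have lin: "\<And>i. bounded_linear (f' i)"
    using assms by (simp add: has_derivative_at_within)
  then have "\<forall>i. \<exists>K. \<forall>x. norm (f' i x) \<le> norm x * K"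
    using bounded_linear.bounded by blast
  then obtain K where K: "\<And>i x. norm (f' i x) \<le> norm x * K i"
    by metis
  show "bounded_linear (\<lambda>h. \<chi> i. f' i h)"
  proof (rule bounded_linear_intro[where K="sum K UNIV"])
    fix x
    have "norm (\<chi> i. f' i x) \<le> (\<Sum>i\<in>UNIV. norm (f' i x))"
      by (simp add: norm_vec_def L2_set_le_sum)
    also have "\<dots> \<le> (\<Sum>i\<in>UNIV. norm x * K i)"
      using K by (intro sum_mono)
    finally show "norm (\<chi> i. f' i x) \<le> norm x * sum K UNIV"
      by (simp add: sum_distrib_left)
  qed (use lin in \<open>simp_all add: vec_eq_iff linear_simps\<close>)
  show "((\<lambda>y. (f y - f z - (\<chi> i. f' i (y - z))) /\<^sub>R norm (y - z)) \<longlongrightarrow> 0) (at z)"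
    using assms by (intro vec_tendstoI) (simp add: has_derivative_at_within)
qed

definition holo_at :: "(complex ^ 'n \<Rightarrow> complex) \<Rightarrow> complex ^ 'n \<Rightarrow> bool" where
  "holo_at f z \<longleftrightarrow> (\<exists>L. (f has_derivative L) (at z) \<and> (\<forall>c w. L (c *s w) = c * L w))"

lemma holo_at_const: "holo_at (\<lambda>_. c) z"
  unfolding holo_at_def by (intro exI[of _ "\<lambda>_. 0"]) auto

lemma holo_at_add:
  assumes "holo_at f z" "holo_at g z"
  shows "holo_at (\<lambda>x. f x + g x) z"
proof -
  obtain L M where "(f has_derivative L) (at z)" "\<forall>c w. L (c *s w) = c * L w"
    "(g has_derivative M) (at z)" "\<forall>c w. M (c *s w) = c * M w"
    using assms unfolding holo_at_def by blast
  then show ?thesis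
    unfolding holo_at_def
    by (intro exI[of _ "\<lambda>h. L h + M h"] conjI has_derivative_add) (auto simp: algebra_simps)
qed

lemma holo_at_diff:
  assumes "holo_at f z" "holo_at g z"
  shows "holo_at (\<lambda>x. f x - g x) z"
proof -
  obtain L M where "(f has_derivative L) (at z)" "\<forall>c w. L (c *s w) = c * L w"
    "(g has_derivative M) (at z)" "\<forall>c w. M (c *s w) = c * M w"
    using assms unfolding holo_at_def by blast
  then show ?thesis
    unfolding holo_at_def
    by (intro exI[of _ "\<lambda>h. L h - M h"] conjI has_derivative_diff) (auto simp: algebra_simps)
qed

lemma holo_at_mult:
  assumes "holo_at f z" "holo_at g z"
  shows "holo_at (\<lambda>x. f x * g x) z"
proof -
  obtain L M where "(f has_derivative L) (at z)" "\<forall>c w. L (c *s w) = c * L w"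
    "(g has_derivative M) (at z)" "\<forall>c w. M (c *s w) = c * M w"
    using assms unfolding holo_at_def by blast
  then show ?thesis
    unfolding holo_at_def
    by (intro exI[of _ "\<lambda>h. f z * M h + L h * g z"] conjI has_derivative_mult)
      (auto simp: algebra_simps)
qed

lemma holo_at_compose:
  assumes "holo_at f z" "(\<phi> has_field_derivative d) (at (f z))"
  shows "holo_at (\<lambda>x. \<phi> (f x)) z"
proof -
  obtain L where L: "(f has_derivative L) (at z)" "\<forall>c w. L (c *s w) = c * L w"
    using assms(1) unfolding holo_at_def by blast
  have "(\<phi> has_derivative (\<lambda>h. d * h)) (at (f z))"
    using assms(2) by (simp add: has_field_derivative_def)
  from has_derivative_compose[OF L(1) this] show ?thesis
    unfolding holo_at_def using L(2) by (auto intro!: exI[of _ "\<lambda>h. d * L h"])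
qed

lemma holo_at_divide:
  assumes "holo_at f z" "holo_at g z" "g z \<noteq> 0"
  shows "holo_at (\<lambda>x. f x / g x) z"
  unfolding divide_inverse
  using assms by (intro holo_at_mult holo_at_compose[where \<phi>=inverse]) (auto intro: DERIV_inverse)

lemma holo_at_power2: "holo_at f z \<Longrightarrow> holo_at (\<lambda>x. (f x)\<^sup>2) z"
  unfolding power2_eq_square by (rule holo_at_mult)

lemma holo_at_sum: "(\<And>i. i \<in> A \<Longrightarrow> holo_at (f i) z) \<Longrightarrow> holo_at (\<lambda>x. \<Sum>i\<in>A. f i x) z"
  by (induction A rule: infinite_finite_induct) (simp_all add: holo_at_const holo_at_add)

lemma holo_at_vec_nth:
  assumes "holo_on G S" "z \<in> S"
  shows "holo_at (\<lambda>x. G x $ i) z"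
proof -
  obtain L where L: "(G has_derivative L) (at z)" "\<forall>(c::complex) w. L (c *s w) = c *s L w"
    using assms unfolding holo_on_def by blast
  have "((\<lambda>x. G x $ i) has_derivative (\<lambda>h. L h $ i)) (at z)"
    using bounded_linear.has_derivative[OF bounded_linear_vec_nth L(1)] .
  with L(2) show ?thesis
    unfolding holo_at_def by auto
qed

lemma holo_onI_components:
  assumes "\<And>z j. z \<in> S \<Longrightarrow> holo_at (\<lambda>x. \<Phi> x $ j) z"
  shows "holo_on \<Phi> S"
  unfolding holo_on_def
proof
  fix z assume "z \<in> S"
  then have "\<forall>j. \<exists>L. ((\<lambda>x. \<Phi> x $ j) has_derivative L) (at z) \<and> (\<forall>c w. L (c *s w) = c * L w)"
    using assms unfolding holo_at_def by blast
  then obtain L where "\<And>j. ((\<lambda>x. \<Phi> x $ j) has_derivative L j) (at z)"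
    and "\<And>j c w. L j (c *s w) = c * L j w"
    by metis
  then show "\<exists>L. (\<Phi> has_derivative L) (at z) \<and> (\<forall>(c::complex) w. L (c *s w) = c *s L w)"
    by (intro exI[of _ "\<lambda>h. \<chi> j. L j h"]) (auto intro!: has_derivative_vec_lambda simp: vec_eq_iff)
qed

lemma holo_on_imp_continuous_on: "holo_on \<Phi> S \<Longrightarrow> continuous_on S \<Phi>"
  unfolding holo_on_def by (meson continuous_at_imp_continuous_on has_derivative_continuous)

lemma hnorm2_eq_norm_power2: "hnorm2 (x :: complex ^ 'k) = (norm x)\<^sup>2"
  unfolding hnorm2_def norm_vec_def L2_set_def by (simp add: sum_nonneg)

lemma unit_ball_eq_ball: "(unit_ball :: (complex ^ 'k) set) = ball 0 1"
  unfolding unit_ball_def hnorm2_eq_norm_power2[unfolded hnorm2_def]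
  by (auto simp: abs_square_less_1)

lemma sum_UNIV_Plus_unit:
  "(\<Sum>j\<in>(UNIV :: ('m::finite + unit) set). f j) = (\<Sum>i\<in>UNIV. f (Inl i)) + f (Inr ())"
proof -
  have "(\<Sum>j\<in>(UNIV :: ('m + unit) set). f j) = (\<Sum>j\<in>(UNIV :: 'm set) <+> (UNIV :: unit set). f j)"
    by simp
  also have "\<dots> = (\<Sum>i\<in>UNIV. f (Inl i)) + (\<Sum>u\<in>UNIV. f (Inr u))"
    by (subst sum.Plus) auto
  finally show ?thesis by (simp add: UNIV_unit)
qed

lemma norm_sum_squares_le: "cmod (\<Sum>i\<in>A. (f i)\<^sup>2) \<le> (\<Sum>i\<in>A. (cmod (f i))\<^sup>2)"
  by (rule order_trans[OF norm_sum]) (simp add: norm_power)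

lemma norm_bilin_le_hnorm2: "cmod (bilin Z) \<le> hnorm2 Z"
  unfolding bilin_def hnorm2_def by (rule norm_sum_squares_le)

lemma norm_vec_nth_lt_1:
  assumes "hnorm2 (g :: complex ^ 'm) < 1"
  shows "cmod (g $ l) < 1"
proof -
  have "(cmod (g $ l))\<^sup>2 \<le> hnorm2 g"
    unfolding hnorm2_def by (rule member_le_sum) auto
  with assms have "(cmod (g $ l))\<^sup>2 < 1"
    by linarith
  then show ?thesis
    by (simp add: abs_square_less_1)
qed

definition rho_IV :: "complex ^ 'k \<Rightarrow> real" where
  "rho_IV Z = 1 - hnorm2 Z + (1/4) * (cmod (bilin Z))\<^sup>2"

lemma continuous_on_rho_IV: "continuous_on S rho_IV"
  unfolding rho_IV_def hnorm2_eq_norm_power2 bilin_def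
  by (intro continuous_intros linear_continuous_on bounded_linear_vec_nth)

lemma DIV_memberI:
  assumes "rho_IV Z > 0" "cmod (bilin Z) < 2"
  shows "Z \<in> DIV"
proof -
  have "(cmod (bilin Z))\<^sup>2 < 2\<^sup>2"
    using assms(2) by (intro power_strict_mono) auto
  with assms(1) show ?thesis
    unfolding DIV_def rho_IV_def by auto
qed

lemma proper_map_DIV_if_rho_IV_pullback:
  fixes G :: "complex ^ 'n \<Rightarrow> complex ^ 'm" and \<Phi> :: "complex ^ 'n \<Rightarrow> complex ^ 'k"
  assumes G: "proper_map G unit_ball unit_ball"
    and \<Phi>: "continuous_on unit_ball \<Phi>" "\<Phi> ` unit_ball \<subseteq> DIV"
    and rho: "\<And>z. z \<in> unit_ball \<Longrightarrow> rho_IV (\<Phi> z) = 1 - hnorm2 (G z)"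
  shows "proper_map \<Phi> unit_ball DIV"
  unfolding proper_map_def
proof (intro conjI \<Phi>(2) allI impI)
  fix K :: "(complex ^ 'k) set"
  assume K: "K \<subseteq> DIV \<and> compact K"
  show "compact (unit_ball \<inter> \<Phi> -` K)"
  proof (cases "K = {}")
    case False
    obtain k where "k \<in> K" and k: "\<And>x. x \<in> K \<Longrightarrow> rho_IV k \<le> rho_IV x"
      using continuous_attains_inf[OF _ False continuous_on_rho_IV] K by blast
    define e where "e = rho_IV k"
    have "e > 0"
      using \<open>k \<in> K\<close> K unfolding e_def rho_IV_def DIV_def by auto
    define C where "C = cball (0 :: complex ^ 'm) (sqrt (1 - e))"
    have "C \<subseteq> unit_ball"
      using \<open>e > 0\<close> unfolding C_def unit_ball_eq_ball by (simp add: cball_subset_ball_iff)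
    then have C: "compact (unit_ball \<inter> G -` C)"
      using G unfolding proper_map_def C_def by auto
    have "G z \<in> C" if "z \<in> unit_ball" "\<Phi> z \<in> K" for z
    proof -
      have "e \<le> 1 - (norm (G z))\<^sup>2"
        using k[OF that(2)] rho[OF that(1)] unfolding e_def hnorm2_eq_norm_power2 by simp
      then show ?thesis
        unfolding C_def by (auto intro: real_le_rsqrt)
    qed
    then have eq: "unit_ball \<inter> \<Phi> -` K = (unit_ball \<inter> G -` C) \<inter> \<Phi> -` K"
      by blast
    have "closed ((unit_ball \<inter> G -` C) \<inter> \<Phi> -` K)"
      by (rule continuous_closed_preimage)
        (use C K compact_imp_closed continuous_on_subset[OF \<Phi>(1)] in auto)
    from closed_Int_compact[OF this C] show ?thesis
      unfolding eq by (metis inf.cobounded1 inf.absorb1)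
  qed simp
qed

lemma parallelogram_law:
  fixes x y :: "'a::real_inner"
  shows "(norm (x + y))\<^sup>2 + (norm (x - y))\<^sup>2 = 2 * (norm x)\<^sup>2 + 2 * (norm y)\<^sup>2"
  by (simp add: power2_norm_eq_inner inner_add inner_diff inner_commute)

text \<open>With \<open>a = s/2\<close> and \<open>b = g(1 - g)\<close> the numerators are \<open>a + b\<close> and \<open>\<i>(a - b)\<close>, so their
  squares add up to \<open>4ab\<close> and, by the parallelogram law, their squared moduli to
  \<open>2\<bar>a\<bar>\<^sup>2 + 2\<bar>b\<bar>\<^sup>2\<close>.\<close>
lemma H_new_coordinates:
  fixes s g :: complex
  assumes "g \<noteq> 1"
  defines "Pm \<equiv> s / 2 - g\<^sup>2 + g"
    and "Pm1 \<equiv> \<i> * (s / 2 + g\<^sup>2 - g)"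
    and "Q \<equiv> complex_of_real (sqrt 2) * (1 - g)"
  shows "(Pm / Q)\<^sup>2 + (Pm1 / Q)\<^sup>2 = s * g / (1 - g)"
    and "(cmod (Pm / Q))\<^sup>2 + (cmod (Pm1 / Q))\<^sup>2 = (cmod s)\<^sup>2 / (4 * (cmod (1 - g))\<^sup>2) + (cmod g)\<^sup>2"
proof -
  have "1 - g \<noteq> 0"
    using assms(1) by simp
  have sqrt2: "(complex_of_real (sqrt 2))\<^sup>2 = 2"
    by (metis of_real_numeral of_real_power real_sqrt_pow2 zero_le_numeral)
  show "(Pm / Q)\<^sup>2 + (Pm1 / Q)\<^sup>2 = s * g / (1 - g)"
    unfolding Pm_def Pm1_def Q_def using \<open>1 - g \<noteq> 0\<close> sqrt2
    by (simp add: power_divide power_mult_distrib field_simps) (simp add: power2_eq_square algebra_simps)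
  have "Pm = s / 2 + g * (1 - g)" and "cmod Pm1 = cmod (s / 2 - g * (1 - g))"
    unfolding Pm_def Pm1_def norm_mult by (simp_all add: algebra_simps power2_eq_square)
  then have "(cmod Pm)\<^sup>2 + (cmod Pm1)\<^sup>2 = 2 * (cmod (s / 2))\<^sup>2 + 2 * (cmod (g * (1 - g)))\<^sup>2"
    by (simp add: parallelogram_law)
  also have "\<dots> = (cmod s)\<^sup>2 / 2 + 2 * (cmod g)\<^sup>2 * (cmod (1 - g))\<^sup>2"
    by (simp add: norm_mult norm_divide power_divide power_mult_distrib)
  finally have numerators: "(cmod Pm)\<^sup>2 + (cmod Pm1)\<^sup>2 = \<dots>" .
  have "(cmod Q)\<^sup>2 = 2 * (cmod (1 - g))\<^sup>2"
    unfolding Q_def by (simp add: norm_mult power_mult_distrib)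
  then have "(cmod (Pm / Q))\<^sup>2 + (cmod (Pm1 / Q))\<^sup>2
      = ((cmod Pm)\<^sup>2 + (cmod Pm1)\<^sup>2) / (2 * (cmod (1 - g))\<^sup>2)"
    by (simp add: norm_divide power_divide add_divide_distrib)
  also have "\<dots> = (cmod s)\<^sup>2 / (4 * (cmod (1 - g))\<^sup>2) + (cmod g)\<^sup>2"
    unfolding numerators using \<open>1 - g \<noteq> 0\<close> by (simp add: field_simps power2_eq_square)
  finally show "(cmod (Pm / Q))\<^sup>2 + (cmod (Pm1 / Q))\<^sup>2 = \<dots>" .
qed

lemma H_map_sums:
  fixes G :: "complex ^ 'n \<Rightarrow> complex ^ 'm" and z l
  defines "g \<equiv> G z"
  defines "s \<equiv> (\<Sum>i\<in>UNIV - {l}. (g $ i)\<^sup>2)"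
  defines "Pm \<equiv> s / 2 - (g $ l)\<^sup>2 + g $ l"
    and "Pm1 \<equiv> \<i> * (s / 2 + (g $ l)\<^sup>2 - g $ l)"
    and "Q \<equiv> complex_of_real (sqrt 2) * (1 - g $ l)"
  shows "hnorm2 (H_map G l z)
           = (\<Sum>i\<in>UNIV - {l}. (cmod (g $ i))\<^sup>2) + ((cmod (Pm / Q))\<^sup>2 + (cmod (Pm1 / Q))\<^sup>2)"
    and "bilin (H_map G l z) = s + ((Pm / Q)\<^sup>2 + (Pm1 / Q)\<^sup>2)"
proof -
  have H: "H_map G l z = (\<chi> j. case j of Inl i \<Rightarrow> (if i = l then Pm / Q else g $ i)
                                       | Inr _ \<Rightarrow> Pm1 / Q)"
    unfolding H_map_def Let_def assms by simp
  have old: "(\<Sum>i\<in>UNIV. f (H_map G l z $ Inl i)) = f (Pm / Q) + (\<Sum>i\<in>UNIV - {l}. f (g $ i))"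
    for f :: "complex \<Rightarrow> 'b::comm_monoid_add"
  proof -
    have "(\<Sum>i\<in>UNIV - {l}. f (H_map G l z $ Inl i)) = (\<Sum>i\<in>UNIV - {l}. f (g $ i))"
      by (rule sum.cong) (auto simp: H)
    then show ?thesis
      by (simp add: sum.remove[of UNIV l, where g="\<lambda>i. f (H_map G l z $ Inl i)"]) (simp add: H)
  qed
  show "hnorm2 (H_map G l z)
      = (\<Sum>i\<in>UNIV - {l}. (cmod (g $ i))\<^sup>2) + ((cmod (Pm / Q))\<^sup>2 + (cmod (Pm1 / Q))\<^sup>2)"
    unfolding hnorm2_def sum_UNIV_Plus_unit old[of "\<lambda>x. (cmod x)\<^sup>2"] by (simp add: H)
  show "bilin (H_map G l z) = s + ((Pm / Q)\<^sup>2 + (Pm1 / Q)\<^sup>2)"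
    unfolding bilin_def sum_UNIV_Plus_unit old[of "\<lambda>x. x\<^sup>2"] s_def by (simp add: H)
qed

lemma bilin_H_map:
  assumes "G z $ l \<noteq> 1"
  shows "bilin (H_map G l z) = (\<Sum>i\<in>UNIV - {l}. (G z $ i)\<^sup>2) / (1 - G z $ l)"
  using assms unfolding H_map_sums(2) H_new_coordinates(1)[where g="G z $ l", OF assms]
  by (simp add: field_simps)

lemma rho_IV_H_map:
  assumes "G z $ l \<noteq> 1"
  shows "rho_IV (H_map G l z) = 1 - hnorm2 (G z)"
proof -
  have "hnorm2 (G z) = (cmod (G z $ l))\<^sup>2 + (\<Sum>i\<in>UNIV - {l}. (cmod (G z $ i))\<^sup>2)"
    unfolding hnorm2_def by (rule sum.remove) auto
  then show ?thesis
    unfolding rho_IV_def bilin_H_map[where G=G, OF assms] H_map_sums(1)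
      H_new_coordinates(2)[where g="G z $ l", OF assms]
    by (simp add: norm_divide power_divide)
qed

lemma norm_bilin_H_map_lt_2:
  assumes "hnorm2 (G z) < 1"
  shows "cmod (bilin (H_map G l z)) < 2"
proof -
  define g where "g = G z $ l"
  define s where "s = (\<Sum>i\<in>UNIV - {l}. (G z $ i)\<^sup>2)"
  have "cmod g < 1"
    unfolding g_def using assms by (rule norm_vec_nth_lt_1)
  have "hnorm2 (G z) = (cmod g)\<^sup>2 + (\<Sum>i\<in>UNIV - {l}. (cmod (G z $ i))\<^sup>2)"
    unfolding hnorm2_def g_def by (rule sum.remove) auto
  with assms norm_sum_squares_le[of "\<lambda>i. G z $ i" "UNIV - {l}"]
  have "cmod s < (1 - cmod g) * (1 + cmod g)"
    unfolding s_def by (simp add: algebra_simps power2_eq_square)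
  also have "\<dots> \<le> cmod (1 - g) * 2"
    using \<open>cmod g < 1\<close> norm_triangle_ineq2[of 1 g] by (intro mult_mono) auto
  finally have "cmod (s / (1 - g)) < 2"
    using \<open>cmod g < 1\<close> by (auto simp: norm_divide divide_less_eq)
  moreover have "g \<noteq> 1"
    using \<open>cmod g < 1\<close> by auto
  ultimately show ?thesis
    unfolding g_def s_def by (simp add: bilin_H_map)
qed

lemma holo_on_H_map:
  assumes "holo_on G S" "\<And>z. z \<in> S \<Longrightarrow> G z $ l \<noteq> 1"
  shows "holo_on (H_map G l) S"
proof (rule holo_onI_components)
  fix z j assume "z \<in> S"
  have G: "\<And>i. holo_at (\<lambda>x. G x $ i) z"
    using holo_at_vec_nth[OF assms(1) \<open>z \<in> S\<close>] .
  have Q: "complex_of_real (sqrt 2) * (1 - G z $ l) \<noteq> 0"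
    using assms(2)[OF \<open>z \<in> S\<close>] by simp
  have new_coordinate: "holo_at (\<lambda>x. P x / (complex_of_real (sqrt 2) * (1 - G x $ l))) z"
    if "P = (\<lambda>x. c * ((\<Sum>i\<in>UNIV - {l}. (G x $ i)\<^sup>2) / 2 + d * (G x $ l)\<^sup>2 + e * G x $ l))"
    for P c d e
    unfolding that
    by (intro holo_at_divide holo_at_add holo_at_mult holo_at_diff holo_at_power2 holo_at_sum
        holo_at_const G Q) simp
  show "holo_at (\<lambda>x. H_map G l x $ j) z"
  proof (cases j)
    case (Inl i)
    show ?thesis
      using new_coordinate[of _ 1 "-1" 1]
      unfolding Inl H_map_def Let_def by (cases "i = l") (simp_all add: G)
  next
    case Inr
    show ?thesis
      using new_coordinate[of _ \<i> 1 "-1"]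
      unfolding Inr H_map_def Let_def by simp
  qed
qed

lemma bilin_W_map: "bilin (W_map G z) = 2 * (1 - csqrt (1 - bilin (G z)))"
proof -
  have "bilin (W_map G z) = bilin (G z) + (1 - csqrt (1 - bilin (G z)))\<^sup>2"
    unfolding bilin_def W_map_def sum_UNIV_Plus_unit by simp
  also have "\<dots> = 2 * (1 - csqrt (1 - bilin (G z)))"
    using power2_csqrt[of "1 - bilin (G z)"] by (simp add: power2_eq_square algebra_simps)
  finally show ?thesis .
qed

lemma rho_IV_W_map: "rho_IV (W_map G z) = 1 - hnorm2 (G z)"
proof -
  have "hnorm2 (W_map G z) = hnorm2 (G z) + (cmod (1 - csqrt (1 - bilin (G z))))\<^sup>2"
    unfolding hnorm2_def bilin_def W_map_def sum_UNIV_Plus_unit by simp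
  then show ?thesis
    unfolding rho_IV_def bilin_W_map norm_mult by (simp add: power_mult_distrib)
qed

text \<open>\<open>(1 - \<surd>(1 - t))(1 + \<surd>(1 - t)) = t\<close>, and \<open>\<bar>1 + \<surd>(1 - t)\<bar> \<ge> 1\<close> because the
  principal root has nonnegative real part.\<close>
lemma norm_1_minus_csqrt_1_minus_le: "cmod (1 - csqrt (1 - t)) \<le> cmod t"
proof -
  define u where "u = csqrt (1 - t)"
  have "(1 - u) * (1 + u) = t"
    unfolding u_def by (simp add: algebra_simps flip: power2_eq_square)
  then have prod: "cmod (1 - u) * cmod (1 + u) = cmod t"
    by (metis norm_mult)
  have "1 \<le> Re (1 + u)"
    using Re_csqrt[of "1 - t"] unfolding u_def by simp
  then have "1 \<le> cmod (1 + u)"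
    using complex_Re_le_cmod[of "1 + u"] by linarith
  then show ?thesis
    using prod mult_left_mono[of 1 "cmod (1 + u)" "cmod (1 - u)"] unfolding u_def by simp
qed

lemma norm_bilin_W_map_lt_2:
  assumes "hnorm2 (G z) < 1"
  shows "cmod (bilin (W_map G z)) < 2"
  using norm_1_minus_csqrt_1_minus_le[of "bilin (G z)"] norm_bilin_le_hnorm2[of "G z"] assms
  unfolding bilin_W_map norm_mult by simp

lemma holo_on_W_map:
  assumes "holo_on G S" "\<And>z. z \<in> S \<Longrightarrow> Re (bilin (G z)) < 1"
  shows "holo_on (W_map G) S"
proof (rule holo_onI_components)
  fix z j assume "z \<in> S"
  have G: "\<And>i. holo_at (\<lambda>x. G x $ i) z"
    using holo_at_vec_nth[OF assms(1) \<open>z \<in> S\<close>] .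
  have "holo_at (\<lambda>x. 1 - bilin (G x)) z"
    unfolding bilin_def by (intro holo_at_diff holo_at_const holo_at_sum holo_at_power2 G)
  moreover have "1 - bilin (G z) \<notin> \<real>\<^sub>\<le>\<^sub>0"
    using assms(2)[OF \<open>z \<in> S\<close>] by (simp add: complex_nonpos_Reals_iff)
  then have "(csqrt has_field_derivative inverse (2 * csqrt (1 - bilin (G z)))) (at (1 - bilin (G z)))"
    by (rule has_field_derivative_csqrt)
  ultimately have "holo_at (\<lambda>x. csqrt (1 - bilin (G x))) z"
    by (rule holo_at_compose)
  then have "holo_at (\<lambda>x. 1 - csqrt (1 - bilin (G x))) z"
    by (intro holo_at_diff holo_at_const)
  then show "holo_at (\<lambda>x. W_map G x $ j) z"
    unfolding W_map_def bilin_def by (cases j) (simp_all add: G)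
qed

theorem mainTheorem17:
  fixes G :: "complex ^ 'n \<Rightarrow> complex ^ 'm" and l :: 'm
  assumes "CARD('m) \<ge> CARD('n)"
    and "holo_proper G unit_ball unit_ball"
    and "G 0 = 0"
  shows "(\<forall>z\<in>unit_ball. 1 - hnorm2 (H_map G l z) + (1/4) * (cmod (bilin (H_map G l z)))\<^sup>2
                          = 1 - (\<Sum>i\<in>UNIV. (cmod (G z $ i))\<^sup>2))
       \<and> (\<forall>z\<in>unit_ball. 1 - hnorm2 (W_map G z) + (1/4) * (cmod (bilin (W_map G z)))\<^sup>2
                          = 1 - (\<Sum>i\<in>UNIV. (cmod (G z $ i))\<^sup>2))
       \<and> holo_proper (H_map G l) unit_ball DIV
       \<and> holo_proper (W_map G) unit_ball DIV"
proof -
  have holo: "holo_on G unit_ball" and proper: "proper_map G unit_ball unit_ball"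
    using assms(2) unfolding holo_proper_def by auto
  have G_lt_1: "hnorm2 (G z) < 1" if "z \<in> unit_ball" for z
    using proper that unfolding proper_map_def unit_ball_def hnorm2_def by auto
  have G_l_ne_1: "G z $ l \<noteq> 1" if "z \<in> unit_ball" for z
    using norm_vec_nth_lt_1[OF G_lt_1[OF that], of l] by auto
  have Re_bilin_G: "Re (bilin (G z)) < 1" if "z \<in> unit_ball" for z
    using complex_Re_le_cmod[of "bilin (G z)"] norm_bilin_le_hnorm2[of "G z"] G_lt_1[OF that]
    by linarith
  have rho_H: "\<And>z. z \<in> unit_ball \<Longrightarrow> rho_IV (H_map G l z) = 1 - hnorm2 (G z)"
    using rho_IV_H_map G_l_ne_1 by blast
  have holo_H: "holo_on (H_map G l) unit_ball"
    using holo G_l_ne_1 by (rule holo_on_H_map)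
  have holo_W: "holo_on (W_map G) unit_ball"
    using holo Re_bilin_G by (rule holo_on_W_map)
  have "H_map G l ` unit_ball \<subseteq> DIV"
    using rho_H G_lt_1 by (auto intro!: DIV_memberI norm_bilin_H_map_lt_2)
  with proper holo_on_imp_continuous_on[OF holo_H]
  have "proper_map (H_map G l) unit_ball DIV"
    using rho_H by (rule proper_map_DIV_if_rho_IV_pullback)
  moreover have "W_map G ` unit_ball \<subseteq> DIV"
    using G_lt_1 by (auto simp: rho_IV_W_map intro!: DIV_memberI norm_bilin_W_map_lt_2)
  with proper holo_on_imp_continuous_on[OF holo_W]
  have "proper_map (W_map G) unit_ball DIV"
    using rho_IV_W_map by (rule proper_map_DIV_if_rho_IV_pullback)
  ultimately show ?thesis
    using rho_H rho_IV_W_map holo_H holo_W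
    unfolding rho_IV_def holo_proper_def hnorm2_def by auto
qed

end
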